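(* Assume $\|\phi_{y,x}\|\le\Phi$ for all inputs $x$ and outputs $y$, for some $\Phi>0$. Then there exist $M_1,M_2>0$ such that for all $\theta\in\Theta$, $$\frac1{N_1}\sum_{(x,y_w,y_\ell)\in\mathcal{D}_{\mathrm{DPO}}}\|g_{\mathrm{DPO}}(\theta;x,y_w,y_\ell)\|^2\le M_1^2,\qquad \frac1{N_2}\sum_{(x,y)\in\mathcal{D}_{\mathrm{SFT}}}\|g_{\mathrm{SFT}}(\theta;x,y)\|^2\le M_2^2.$$
   Context: $\Theta\subseteq\mathbb{R}^d$. Policy model: for a finite output set $\mathcal{Y}$, $\pi_\theta(y\mid x)=\exp(\theta^\top\phi_{y,x})/\sum_{y'\in\mathcal{Y}}\exp(\theta^\top\phi_{y',x})$ with feature vectors $\phi_{y,x}\in\mathbb{R}^d$; the reference policy is $\pi_{\mathrm{ref}}=\pi_{\theta_{\mathrm{ref}}}$ for fixed $\theta_{\mathrm{ref}}$. Datasets $\mathcal{D}_{\mathrm{DPO}}=\{(x^{(i)},y_w^{(i)},y_\ell^{(i)})\}_{i=1}^{N_1}$ and $\mathcal{D}_{\mathrm{SFT}}=\{(x^{(i)},y^{(i)})\}_{i=1}^{N_2}$. With $\sigma$ the sigmoid and $\beta>0$, $h_\beta(\theta;x,y_w,y_\ell)=\beta\log\frac{\pi_\theta(y_w|x)}{\pi_{\mathrm{ref}}(y_w|x)}-\beta\log\frac{\pi_\theta(y_\ell|x)}{\pi_{\mathrm{ref}}(y_\ell|x)}$, $g_{\mathrm{DPO}}(\theta;x,y_w,y_\ell)=-(1-\sigma(h_\beta(\theta;x,y_w,y_\ell)))\nabla_\theta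 h_\beta(\theta;x,y_w,y_\ell)$, and $g_{\mathrm{SFT}}(\theta;x,y)=-\nabla_\theta\pi_\theta(y|x)/\pi_\theta(y|x)$. *)

theory Defs
  imports "HOL-Analysis.Analysis"
begin

definition grad :: "('a::euclidean_space \<Rightarrow> real) \<Rightarrow> 'a \<Rightarrow> 'a" where
  "grad f \<theta> = (THE v. (f has_derivative (\<lambda>h. v \<bullet> h)) (at \<theta>))"

definition sigmoid :: "real \<Rightarrow> real" where
  "sigmoid z = 1 / (1 + exp (- z))"

definition policy :: "('x \<Rightarrow> 'y::finite \<Rightarrow> real ^ 'd) \<Rightarrow> real ^ 'd \<Rightarrow> 'x \<Rightarrow> 'y \<Rightarrow> real" where
  "policy \<phi> \<theta> x y = exp (\<theta> \<bullet> \<phi> x y) / (\<Sum>y'\<in>UNIV. exp (\<theta> \<bullet> \<phi> x y'))"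

definition h_beta :: "('x \<Rightarrow> 'y::finite \<Rightarrow> real ^ 'd) \<Rightarrow> real ^ 'd \<Rightarrow> real \<Rightarrow> real ^ 'd
    \<Rightarrow> 'x \<Rightarrow> 'y \<Rightarrow> 'y \<Rightarrow> real" where
  "h_beta \<phi> \<theta>ref \<beta> \<theta> x yw yl =
     \<beta> * ln (policy \<phi> \<theta> x yw / policy \<phi> \<theta>ref x yw)
     - \<beta> * ln (policy \<phi> \<theta> x yl / policy \<phi> \<theta>ref x yl)"

definition g_DPO :: "('x \<Rightarrow> 'y::finite \<Rightarrow> real ^ 'd) \<Rightarrow> real ^ 'd \<Rightarrow> real \<Rightarrow> real ^ 'd
    \<Rightarrow> 'x \<Rightarrow> 'y \<Rightarrow> 'y \<Rightarrow> real ^ 'd" where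
  "g_DPO \<phi> \<theta>ref \<beta> \<theta> x yw yl =
     - ((1 - sigmoid (h_beta \<phi> \<theta>ref \<beta> \<theta> x yw yl))
        *\<^sub>R grad (\<lambda>t. h_beta \<phi> \<theta>ref \<beta> t x yw yl) \<theta>)"

definition g_SFT :: "('x \<Rightarrow> 'y::finite \<Rightarrow> real ^ 'd) \<Rightarrow> real ^ 'd \<Rightarrow> 'x \<Rightarrow> 'y \<Rightarrow> real ^ 'd" where
  "g_SFT \<phi> \<theta> x y = - ((1 / policy \<phi> \<theta> x y) *\<^sub>R grad (\<lambda>t. policy \<phi> t x y) \<theta>)"

end

theory Submission imports Defs begin

(* For the log-linear policy, h_beta is affine in theta with gradient beta (phi_yw - phi_yl), and
   0 < 1 - sigma < 1, so every DPO gradient has norm at most 2 beta Phi. The SFT gradient is the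
   gradient of -log pi_theta(y|x), namely E_{y' ~ pi_theta}[phi_y'] - phi_y; the expectation is a
   convex combination of features, so every SFT gradient has norm at most 2 Phi. *)

lemma grad_eqI:
  fixes f :: "'a::euclidean_space \<Rightarrow> real"
  assumes "(f has_derivative (\<lambda>h. v \<bullet> h)) (at \<theta>)"
  shows "grad f \<theta> = v"
  unfolding grad_def
proof (rule the_equality)
  show "(f has_derivative (\<lambda>h. v \<bullet> h)) (at \<theta>)" by fact
  fix w assume "(f has_derivative (\<lambda>h. w \<bullet> h)) (at \<theta>)"
  with assms have "(\<lambda>h. w \<bullet> h) = (\<lambda>h. v \<bullet> h)" using has_derivative_unique by blast
  then have "(w - v) \<bullet> (w - v) = 0" by (metis inner_diff_left right_minus_eq)
  then show "w = v" by simp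
qed

(* The hypothesis 0 \<le> B covers the empty list, whose average is 1 / 0 * 0 = 0. *)
lemma average_le:
  fixes f :: "'a \<Rightarrow> real"
  assumes "\<And>z. z \<in> set xs \<Longrightarrow> f z \<le> B" and "0 \<le> B"
  shows "(1 / real (length xs)) * (\<Sum>z\<leftarrow>xs. f z) \<le> B"
proof -
  have "(\<Sum>z\<leftarrow>xs. f z) \<le> (\<Sum>z\<leftarrow>xs. B)" using assms(1) by (rule sum_list_mono)
  also have "\<dots> = real (length xs) * B" by (simp add: sum_list_triv)
  finally show ?thesis using assms(2) by (cases "xs = []") (auto simp: field_simps)
qed

lemma sigmoid_pos: "0 < sigmoid z"
  and sigmoid_less_1: "sigmoid z < 1"
  unfolding sigmoid_def by (auto simp: divide_simps add_pos_pos)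

lemma partition_pos:
  fixes \<phi> :: "'x \<Rightarrow> 'y::finite \<Rightarrow> 'a::real_inner"
  shows "0 < (\<Sum>y'\<in>UNIV. exp (\<theta> \<bullet> \<phi> x y'))"
  by (intro sum_pos) auto

lemma policy_pos: "0 < policy \<phi> \<theta> x y"
  unfolding policy_def using partition_pos[of \<theta> \<phi> x] by (rule divide_pos_pos[OF exp_gt_zero])

lemma sum_policy: "(\<Sum>y\<in>UNIV. policy \<phi> \<theta> x y) = 1"
  unfolding policy_def using partition_pos[of \<theta> \<phi> x]
  by (simp add: sum_divide_distrib[symmetric])

lemma ln_policy:
  "ln (policy \<phi> \<theta> x y) = \<theta> \<bullet> \<phi> x y - ln (\<Sum>y'\<in>UNIV. exp (\<theta> \<bullet> \<phi> x y'))"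
  unfolding policy_def using partition_pos[of \<theta> \<phi> x] by (simp add: ln_div)

definition mean_feature :: "('x \<Rightarrow> 'y::finite \<Rightarrow> real ^ 'd) \<Rightarrow> real ^ 'd \<Rightarrow> 'x \<Rightarrow> real ^ 'd" where
  "mean_feature \<phi> \<theta> x = (\<Sum>y\<in>UNIV. policy \<phi> \<theta> x y *\<^sub>R \<phi> x y)"

lemma norm_mean_feature_le:
  assumes "\<And>y. norm (\<phi> x y) \<le> \<Phi>"
  shows "norm (mean_feature \<phi> \<theta> x) \<le> \<Phi>"
proof -
  have "norm (mean_feature \<phi> \<theta> x) \<le> (\<Sum>y\<in>UNIV. norm (policy \<phi> \<theta> x y *\<^sub>R \<phi> x y))"
    unfolding mean_feature_def by (rule norm_sum)
  also have "\<dots> \<le> (\<Sum>y\<in>UNIV. policy \<phi> \<theta> x y * \<Phi>)"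
    using assms policy_pos[of \<phi> \<theta> x] by (intro sum_mono) (simp add: abs_of_pos mult_left_mono)
  also have "\<dots> = \<Phi>" by (simp add: sum_distrib_right[symmetric] sum_policy)
  finally show ?thesis .
qed

lemma has_derivative_policy:
  "((\<lambda>t. policy \<phi> t x y) has_derivative
     (\<lambda>h. (policy \<phi> \<theta> x y *\<^sub>R (\<phi> x y - mean_feature \<phi> \<theta> x)) \<bullet> h)) (at \<theta>)"
proof -
  define e where "e y' = exp (\<theta> \<bullet> \<phi> x y')" for y'
  define S where "S = (\<Sum>y'\<in>UNIV. e y')"
  have "S > 0" unfolding S_def e_def by (rule partition_pos)
  have "((\<lambda>t. exp (t \<bullet> \<phi> x y) / (\<Sum>y'\<in>UNIV. exp (t \<bullet> \<phi> x y'))) has_derivative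
      (\<lambda>h. (e y * (h \<bullet> \<phi> x y) * S - e y * (\<Sum>y'\<in>UNIV. e y' * (h \<bullet> \<phi> x y'))) / (S * S))) (at \<theta>)"
    unfolding e_def S_def using partition_pos[of \<theta> \<phi> x]
    by (auto intro!: derivative_eq_intros simp: mult_ac)
  moreover have "(e y * (h \<bullet> \<phi> x y) * S - e y * (\<Sum>y'\<in>UNIV. e y' * (h \<bullet> \<phi> x y'))) / (S * S)
      = (policy \<phi> \<theta> x y *\<^sub>R (\<phi> x y - mean_feature \<phi> \<theta> x)) \<bullet> h" for h
  proof -
    have "h \<bullet> mean_feature \<phi> \<theta> x = (\<Sum>y'\<in>UNIV. e y' * (h \<bullet> \<phi> x y')) / S"
      unfolding mean_feature_def policy_def e_def S_def
      by (simp add: inner_sum_right sum_divide_distrib mult.commute)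
    moreover have "policy \<phi> \<theta> x y = e y / S" unfolding policy_def e_def S_def ..
    ultimately have "(policy \<phi> \<theta> x y *\<^sub>R (\<phi> x y - mean_feature \<phi> \<theta> x)) \<bullet> h
        = e y / S * (h \<bullet> \<phi> x y - (\<Sum>y'\<in>UNIV. e y' * (h \<bullet> \<phi> x y')) / S)"
      by (simp add: inner_diff_left inner_commute[of h])
    with \<open>S > 0\<close> show ?thesis by (simp add: field_simps)
  qed
  ultimately show ?thesis unfolding policy_def by simp
qed

lemma g_SFT_eq: "g_SFT \<phi> \<theta> x y = mean_feature \<phi> \<theta> x - \<phi> x y"
  unfolding g_SFT_def grad_eqI[OF has_derivative_policy]
  using policy_pos[of \<phi> \<theta> x y] by simp

lemma norm_g_SFT_le:
  assumes "\<And>y. norm (\<phi> x y) \<le> \<Phi>"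
  shows "norm (g_SFT \<phi> \<theta> x y) \<le> 2 * \<Phi>"
  unfolding g_SFT_eq
  using norm_mean_feature_le[of \<phi> x \<Phi> \<theta>, OF assms] assms[of y]
  by (intro norm_triangle_le_diff) simp

lemma h_beta_eq:
  "h_beta \<phi> \<theta>ref \<beta> \<theta> x yw yl = \<beta> * (\<theta> \<bullet> (\<phi> x yw - \<phi> x yl))
     - \<beta> * ln (policy \<phi> \<theta>ref x yw) + \<beta> * ln (policy \<phi> \<theta>ref x yl)"
  unfolding h_beta_def
  using policy_pos[of \<phi> \<theta> x yw] policy_pos[of \<phi> \<theta>ref x yw]
        policy_pos[of \<phi> \<theta> x yl] policy_pos[of \<phi> \<theta>ref x yl]
  by (simp add: ln_div ln_policy[of \<phi> \<theta>] inner_diff_right algebra_simps)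

lemma grad_h_beta:
  "grad (\<lambda>t. h_beta \<phi> \<theta>ref \<beta> t x yw yl) \<theta> = \<beta> *\<^sub>R (\<phi> x yw - \<phi> x yl)"
  unfolding h_beta_eq
  by (rule grad_eqI) (auto intro!: derivative_eq_intros simp: inner_commute algebra_simps)

lemma norm_g_DPO_le:
  assumes "0 \<le> \<beta>" and "norm (\<phi> x yw) \<le> \<Phi>" and "norm (\<phi> x yl) \<le> \<Phi>"
  shows "norm (g_DPO \<phi> \<theta>ref \<beta> \<theta> x yw yl) \<le> 2 * \<beta> * \<Phi>"
proof -
  let ?s = "sigmoid (h_beta \<phi> \<theta>ref \<beta> \<theta> x yw yl)"
  have "norm (g_DPO \<phi> \<theta>ref \<beta> \<theta> x yw yl) = (1 - ?s) * (\<beta> * norm (\<phi> x yw - \<phi> x yl))"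
    unfolding g_DPO_def grad_h_beta using assms(1) sigmoid_less_1[of "h_beta \<phi> \<theta>ref \<beta> \<theta> x yw yl"]
    by (simp add: abs_mult)
  also have "\<dots> \<le> 1 * (\<beta> * (2 * \<Phi>))"
    using sigmoid_pos[of "h_beta \<phi> \<theta>ref \<beta> \<theta> x yw yl"] sigmoid_less_1[of "h_beta \<phi> \<theta>ref \<beta> \<theta> x yw yl"]
      assms norm_triangle_le_diff[of "\<phi> x yw" "\<phi> x yl" "2 * \<Phi>"]
    by (intro mult_mono mult_left_mono) auto
  finally show ?thesis by simp
qed

theorem propositionA1:
  fixes \<phi> :: "'x \<Rightarrow> 'y::finite \<Rightarrow> real ^ 'd"
    and \<Theta> :: "(real ^ 'd) set"
    and \<theta>ref :: "real ^ 'd"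
    and \<beta> \<Phi> :: real
    and D_DPO :: "('x \<times> 'y \<times> 'y) list"
    and D_SFT :: "('x \<times> 'y) list"
  assumes "\<beta> > 0"
    and "\<Phi> > 0"
    and "\<forall>x y. norm (\<phi> x y) \<le> \<Phi>"
  shows "\<exists>M1 M2. M1 > 0 \<and> M2 > 0 \<and> (\<forall>\<theta>\<in>\<Theta>.
     (1 / real (length D_DPO)) * (\<Sum>(x, yw, yl)\<leftarrow>D_DPO. (norm (g_DPO \<phi> \<theta>ref \<beta> \<theta> x yw yl))\<^sup>2) \<le> M1\<^sup>2
   \<and> (1 / real (length D_SFT)) * (\<Sum>(x, y)\<leftarrow>D_SFT. (norm (g_SFT \<phi> \<theta> x y))\<^sup>2) \<le> M2\<^sup>2)"
proof (intro exI conjI ballI)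
  show "0 < 2 * \<beta> * \<Phi>" "0 < 2 * \<Phi>" using assms(1,2) by auto
  fix \<theta>
  have "(norm (g_DPO \<phi> \<theta>ref \<beta> \<theta> x yw yl))\<^sup>2 \<le> (2 * \<beta> * \<Phi>)\<^sup>2" for x yw yl
    using assms norm_g_DPO_le[of \<beta> \<phi> x yw \<Phi> yl \<theta>ref \<theta>] by (intro power_mono) auto
  then show "(1 / real (length D_DPO)) * (\<Sum>(x, yw, yl)\<leftarrow>D_DPO. (norm (g_DPO \<phi> \<theta>ref \<beta> \<theta> x yw yl))\<^sup>2)
      \<le> (2 * \<beta> * \<Phi>)\<^sup>2"
    by (intro average_le) auto
  have "(norm (g_SFT \<phi> \<theta> x y))\<^sup>2 \<le> (2 * \<Phi>)\<^sup>2" for x y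
    using assms(3) norm_g_SFT_le[of \<phi> x \<Phi> \<theta> y] by (intro power_mono) auto
  then show "(1 / real (length D_SFT)) * (\<Sum>(x, y)\<leftarrow>D_SFT. (norm (g_SFT \<phi> \<theta> x y))\<^sup>2) \<le> (2 * \<Phi>)\<^sup>2"
    by (intro average_le) auto
qed

end
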